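(* Assume that the super Poincaré inequality $$\mu(f^2)\le r\,\mathcal E(f)+\beta(r)\,\mu(|f|)^2,\qquad r>0,\ f\in\mathcal D(\mathcal E),$$ holds for some decreasing function $\beta:(0,\infty)\to(0,\infty)$. Then for any integers $n,k\ge1$, any $s>0$ and any $f\in\mathcal A$, $$\mu_V(f^21_{\{\rho\le n\}})\le 2s\,e^{K_{n,k}(V)}\mathcal E_V(f)+16\lambda s\,e^{K_{n,k}(V)}\mu_V(f^2)+16s\,e^{Z_n(V)}\eta_{n,k}\|f\|_\infty^2+\beta(s)e^{J_{n,k}(V)}\mu_V(|f|)^2.$$
   Context: Setting: $(E,d)$ is a Polish space with Borel $\sigma$-field and a probability measure $\mu$. Let $q:E\times E\to[0,\infty)$ be measurable with $q(x,x)=0$ for all $x$, and $\lambda:=\sup_{x\in E}\int_E(1\wedge d(x,y)^2)q(x,y)\,\mu(\mathrm dy)<\infty.$ For bounded measurable $f,g$ set $\Gamma(f,g)(x)=\int_E(f(x)-f(y))(g(x)-g(y))q(x,y)\mu(\mathrm dy)$, $\Gamma(f)=\Gamma(f,f)$; $\mathcal A$ is the set of bounded measurable $f$ with $\Gamma(f)$ bounded, assumed dense in $L^2(\mu)$. $(\mathcal E,\mathcal D(\mathcal E))$ is the closure in $L^2(\mu)$ of $\mathcal E(f,g)=\mu(\Gamma(f,g))$ on $\mathcal A$, $\mathcal E(f)=\mathcal E(f,f)$. Fix $o\in E$, $\rho(x)=d(o,x)$. $V$ is measurable, bounded on each $\{\rho\le r\}$, with $\mu(e^V)=1$; $\mu_V=e^V\mu$;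 $\mathcal E_V(f)=\mu_V(\Gamma(f))$ for $f\in\mathcal A$. $\|f\|_\infty$ is the uniform norm. Notation: $K_{n,k}(V)=\sup_{\rho\le n+2}V-\inf_{\rho\le n+k+2}V$; $J_{n,k}(V)=\sup_{\rho\le n+1}V-2\inf_{\rho\le n+k+2}V$; $Z_n(V)=\sup_{\rho\le n+1}V$; $\eta_{n,k}=\iint_{\{\rho(x)>n+k+2,\ \rho(y)\le n+1\}}q(x,y)\mu(\mathrm dy)\mu(\mathrm dx)$. *)

theory Defs
  imports "HOL-Probability.Probability"
begin

definition Gam :: "'a measure \<Rightarrow> ('a \<Rightarrow> 'a \<Rightarrow> real) \<Rightarrow> ('a \<Rightarrow> real) \<Rightarrow> 'a \<Rightarrow> ennreal" where
  "Gam M q f x = (\<integral>\<^sup>+ y. ennreal ((f x - f y)\<^sup>2 * q x y) \<partial>M)"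

definition Aset :: "'a measure \<Rightarrow> ('a \<Rightarrow> 'a \<Rightarrow> real) \<Rightarrow> ('a \<Rightarrow> real) set" where
  "Aset M q = {f. f \<in> borel_measurable M \<and> bounded (range f) \<and> (\<exists>C::real. \<forall>x. Gam M q f x \<le> ennreal C)}"

definition Energy :: "'a measure \<Rightarrow> ('a \<Rightarrow> 'a \<Rightarrow> real) \<Rightarrow> ('a \<Rightarrow> real) \<Rightarrow> ennreal" where
  "Energy M q f = (\<integral>\<^sup>+ x. Gam M q f x \<partial>M)"

definition EnergyV :: "'a measure \<Rightarrow> ('a \<Rightarrow> 'a \<Rightarrow> real) \<Rightarrow> ('a \<Rightarrow> real) \<Rightarrow> ('a \<Rightarrow> real) \<Rightarrow> ennreal" where
  "EnergyV M q V f = (\<integral>\<^sup>+ x. Gam M q f x \<partial>(density M (\<lambda>x. ennreal (exp (V x)))))"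

definition lam :: "'a::metric_space measure \<Rightarrow> ('a \<Rightarrow> 'a \<Rightarrow> real) \<Rightarrow> ennreal" where
  "lam M q = (SUP x. \<integral>\<^sup>+ y. ennreal (min 1 ((dist x y)\<^sup>2) * q x y) \<partial>M)"

definition Kc :: "'a::metric_space \<Rightarrow> ('a \<Rightarrow> real) \<Rightarrow> nat \<Rightarrow> nat \<Rightarrow> real" where
  "Kc z0 V n k = Sup (V ` {x. dist z0 x \<le> real n + 2}) - Inf (V ` {x. dist z0 x \<le> real n + real k + 2})"

definition Jc :: "'a::metric_space \<Rightarrow> ('a \<Rightarrow> real) \<Rightarrow> nat \<Rightarrow> nat \<Rightarrow> real" where
  "Jc z0 V n k = Sup (V ` {x. dist z0 x \<le> real n + 1}) - 2 * Inf (V ` {x. dist z0 x \<le> real n + real k + 2})"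

definition Zc :: "'a::metric_space \<Rightarrow> ('a \<Rightarrow> real) \<Rightarrow> nat \<Rightarrow> real" where
  "Zc z0 V n = Sup (V ` {x. dist z0 x \<le> real n + 1})"

definition eta :: "'a::metric_space measure \<Rightarrow> ('a \<Rightarrow> 'a \<Rightarrow> real) \<Rightarrow> 'a \<Rightarrow> nat \<Rightarrow> nat \<Rightarrow> ennreal" where
  "eta M q z0 n k = (\<integral>\<^sup>+ x. \<integral>\<^sup>+ y. ennreal (indicator {x. dist z0 x > real n + real k + 2} x
       * indicator {y. dist z0 y \<le> real n + 1} y * q x y) \<partial>M \<partial>M)"

definition supnorm :: "('a \<Rightarrow> real) \<Rightarrow> real" where
  "supnorm f = Sup (range (\<lambda>x. \<bar>f x\<bar>))"

text \<open>Super Poincare inequality on the closure D(E) of (E, A): f \<in> D(E) with E(f)=e iff there are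
  f_n \<in> A with f_n \<rightarrow> f in L^2(mu), (f_n) E-Cauchy, and E(f_n) \<rightarrow> e.\<close>
definition super_poincare :: "'a measure \<Rightarrow> ('a \<Rightarrow> 'a \<Rightarrow> real) \<Rightarrow> (real \<Rightarrow> real) \<Rightarrow> bool" where
  "super_poincare M q \<beta> \<longleftrightarrow>
    (\<forall>f fs e r. f \<in> borel_measurable M \<and> (\<integral>\<^sup>+ x. ennreal ((f x)\<^sup>2) \<partial>M) < \<infinity>
       \<and> (\<forall>n. fs n \<in> Aset M q)
       \<and> (\<lambda>n. \<integral>\<^sup>+ x. ennreal ((fs n x - f x)\<^sup>2) \<partial>M) \<longlonglongrightarrow> 0
       \<and> (\<forall>\<epsilon>>0. \<exists>N. \<forall>m\<ge>N. \<forall>n\<ge>N. Energy M q (\<lambda>x. fs m x - fs n x) < ennreal \<epsilon>)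
       \<and> (\<lambda>n. Energy M q (fs n)) \<longlonglongrightarrow> e
       \<and> r > 0
     \<longrightarrow> (\<integral>\<^sup>+ x. ennreal ((f x)\<^sup>2) \<partial>M)
           \<le> ennreal r * e + ennreal (\<beta> r) * (\<integral>\<^sup>+ x. ennreal \<bar>f x\<bar> \<partial>M)\<^sup>2)"

end

theory Submission
  imports Defs
begin

text \<open>Multiply f by a 1-Lipschitz cutoff that equals 1 on the ball of radius n and vanishes outside
  the ball of radius n + 1, and apply the super Poincare inequality for \<mu> to the product g. On the
  support of g the density e^V is at most e^Z(n), and on the ball of radius n + k + 2 it is at least
  e^m with m the infimum of V there; this converts \<mu>-quantities of g into \<mu>_V-quantities of f, the
  product rule for \<Gamma> costing the extra term f(x)^2 \<lambda>. Jumps into the support of g from outside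
  the larger ball are not controlled by V and are paid for by \<eta>(n,k) and the sup norm of f.\<close>

lemma sq_diff_mult_le:
  fixes a b u v :: real
  assumes "0 \<le> v" "v \<le> 1"
  shows "(a * u - b * v)\<^sup>2 \<le> 2 * (a - b)\<^sup>2 + 2 * a\<^sup>2 * (u - v)\<^sup>2"
proof -
  have split: "a * u - b * v = v * (a - b) + a * (u - v)" by algebra
  have "(v * (a - b))\<^sup>2 \<le> (a - b)\<^sup>2"
    using assms by (simp add: power_mult_distrib mult_left_le_one_le power_le_one)
  moreover have "(v * (a - b) + a * (u - v))\<^sup>2 \<le> 2 * (v * (a - b))\<^sup>2 + 2 * (a * (u - v))\<^sup>2"
    using zero_le_power2[of "v * (a - b) - a * (u - v)"] by (simp add: power2_eq_square algebra_simps)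
  ultimately show ?thesis
    unfolding split by (simp add: power_mult_distrib)
qed

definition ball_cutoff :: "'a::metric_space \<Rightarrow> real \<Rightarrow> 'a \<Rightarrow> real" where
  "ball_cutoff z r x = max 0 (min 1 (r + 1 - dist z x))"

lemma ball_cutoff_nonneg: "0 \<le> ball_cutoff z r x"
  by (simp add: ball_cutoff_def)

lemma ball_cutoff_le_one: "ball_cutoff z r x \<le> 1"
  by (simp add: ball_cutoff_def)

lemma ball_cutoff_eq_one: "dist z x \<le> r \<Longrightarrow> ball_cutoff z r x = 1"
  by (simp add: ball_cutoff_def)

lemma dist_less_of_ball_cutoff_nonzero: "ball_cutoff z r x \<noteq> 0 \<Longrightarrow> dist z x < r + 1"
  by (auto simp: ball_cutoff_def)

lemma ball_cutoff_diff_sq_le: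
  "(ball_cutoff z r x - ball_cutoff z r y)\<^sup>2 \<le> min 1 ((dist x y)\<^sup>2)"
proof -
  have "\<bar>dist z x - dist z y\<bar> \<le> dist x y"
    using abs_dist_diff_le[of x z y] by (simp add: dist_commute)
  then have lip: "\<bar>ball_cutoff z r x - ball_cutoff z r y\<bar> \<le> dist x y"
    unfolding ball_cutoff_def by (auto simp: max_def min_def abs_le_iff)
  have "\<bar>ball_cutoff z r x - ball_cutoff z r y\<bar> \<le> 1"
    using ball_cutoff_nonneg[of z r x] ball_cutoff_le_one[of z r x]
      ball_cutoff_nonneg[of z r y] ball_cutoff_le_one[of z r y] by (simp add: abs_le_iff)
  then show ?thesis
    using power_mono[OF lip abs_ge_zero, of 2] by (simp add: abs_square_le_1)
qed

lemma abs_le_supnorm: "bounded (range f) \<Longrightarrow> \<bar>f x\<bar> \<le> supnorm f"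
  unfolding supnorm_def
  by (rule cSUP_upper) (auto simp: bdd_above_def bounded_iff)

lemma super_poincare_Aset:
  assumes SPI: "super_poincare M q \<beta>" and "finite_measure M" and g: "g \<in> Aset M q" and "r > 0"
  shows "(\<integral>\<^sup>+ x. ennreal ((g x)\<^sup>2) \<partial>M)
    \<le> ennreal r * Energy M q g + ennreal (\<beta> r) * (\<integral>\<^sup>+ x. ennreal \<bar>g x\<bar> \<partial>M)\<^sup>2"
proof -
  interpret finite_measure M by fact
  obtain C where C: "\<And>x. \<bar>g x\<bar> \<le> C"
    using g unfolding Aset_def bounded_iff by auto
  have "(\<integral>\<^sup>+ x. ennreal ((g x)\<^sup>2) \<partial>M) \<le> (\<integral>\<^sup>+ x. ennreal (C\<^sup>2) \<partial>M)"
    using C by (intro nn_integral_mono ennreal_leI) (metis abs_ge_zero power2_abs power_mono)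
  also have "\<dots> < \<infinity>"
    using emeasure_finite[of "space M"]
    by (simp add: ennreal_mult_less_top less_top[symmetric] ennreal_mult_eq_top_iff)
  finally have "(\<integral>\<^sup>+ x. ennreal ((g x)\<^sup>2) \<partial>M) < \<infinity>" .
  moreover have "Energy M q (\<lambda>x. 0) = 0"
    by (simp add: Energy_def Gam_def)
  ultimately show ?thesis
    \<comment> \<open>the constant approximating sequence g, g, g, \<dots>\<close>
    using SPI[unfolded super_poincare_def, rule_format, of g "\<lambda>_. g" "Energy M q g" r] g \<open>r > 0\<close>
    by (simp add: Aset_def)
qed

lemma nn_integral_density_sq_indicator_le:
  assumes [measurable]: "f \<in> borel_measurable M" "g \<in> borel_measurable M" "V \<in> borel_measurable M"
    "A \<in> sets M"
    and "\<And>x. x \<in> A \<Longrightarrow> V x \<le> Z" and "\<And>x. x \<in> A \<Longrightarrow> f x = g x"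
  shows "(\<integral>\<^sup>+ x. ennreal ((f x)\<^sup>2 * indicator A x) \<partial>density M (\<lambda>x. ennreal (exp (V x))))
    \<le> ennreal (exp Z) * (\<integral>\<^sup>+ x. ennreal ((g x)\<^sup>2) \<partial>M)"
proof -
  have "ennreal (exp (V x)) * ennreal ((f x)\<^sup>2 * indicator A x) \<le> ennreal (exp Z) * ennreal ((g x)\<^sup>2)"
    for x
    using assms(5,6)[of x]
    by (cases "x \<in> A") (auto simp: ennreal_mult[symmetric] intro!: ennreal_leI mult_right_mono)
  then have "(\<integral>\<^sup>+ x. ennreal (exp (V x)) * ennreal ((f x)\<^sup>2 * indicator A x) \<partial>M)
      \<le> (\<integral>\<^sup>+ x. ennreal (exp Z) * ennreal ((g x)\<^sup>2) \<partial>M)"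
    by (rule nn_integral_mono)
  then show ?thesis
    by (simp add: nn_integral_density nn_integral_cmult)
qed

lemma nn_integral_abs_le_density:
  assumes [measurable]: "f \<in> borel_measurable M" "g \<in> borel_measurable M" "V \<in> borel_measurable M"
    and g_le_f: "\<And>x. \<bar>g x\<bar> \<le> \<bar>f x\<bar>" and m_le_V: "\<And>x. g x \<noteq> 0 \<Longrightarrow> m \<le> V x"
  shows "(\<integral>\<^sup>+ x. ennreal \<bar>g x\<bar> \<partial>M)
    \<le> ennreal (exp (- m)) * (\<integral>\<^sup>+ x. ennreal \<bar>f x\<bar> \<partial>density M (\<lambda>x. ennreal (exp (V x))))"
proof -
  have "\<bar>g x\<bar> \<le> exp (- m) * (exp (V x) * \<bar>f x\<bar>)" for x
  proof (cases "g x = 0")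
    case False
    then have "1 \<le> exp (- m) * exp (V x)"
      using m_le_V[of x] by (simp add: exp_add[symmetric])
    then have "\<bar>f x\<bar> \<le> exp (- m) * exp (V x) * \<bar>f x\<bar>"
      using mult_right_mono[of 1 _ "\<bar>f x\<bar>"] by simp
    then show ?thesis using g_le_f[of x] by (simp add: mult.assoc)
  qed simp
  then have "(\<integral>\<^sup>+ x. ennreal \<bar>g x\<bar> \<partial>M)
      \<le> (\<integral>\<^sup>+ x. ennreal (exp (- m)) * (ennreal (exp (V x)) * ennreal \<bar>f x\<bar>) \<partial>M)"
    by (intro nn_integral_mono) (simp add: ennreal_mult[symmetric] ennreal_leI)
  then show ?thesis
    by (simp add: nn_integral_density nn_integral_cmult)
qed

lemma nn_integral_le_lam:
  "(\<integral>\<^sup>+ y. ennreal (min 1 ((dist x y)\<^sup>2) * q x y) \<partial>M) \<le> lam M q"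
  unfolding lam_def by (rule SUP_upper) simp

locale jump_kernel = finite_measure M
  for M :: "'a::{metric_space, second_countable_topology} measure" +
  fixes q :: "'a \<Rightarrow> 'a \<Rightarrow> real"
  assumes sets_M: "sets M = sets borel"
    and q_measurable [measurable]: "(\<lambda>(x, y). q x y) \<in> borel_measurable (M \<Otimes>\<^sub>M M)"
    and q_nonneg: "\<And>x y. 0 \<le> q x y"
begin

lemma space_M: "space M = UNIV"
  using sets_eq_imp_space_eq[OF sets_M] by simp

lemma measurable_ident_borel [measurable]: "(\<lambda>x. x) \<in> measurable M borel"
  using measurable_ident_sets[OF sets_M] by (simp add: id_def)

lemma dist_measurable [measurable]: "(\<lambda>x. dist z x) \<in> borel_measurable M"
  by (rule borel_measurable_dist) simp_all

text \<open>The measurable method only produces sets of the form {x \<in> space M. P x}.\<close>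
lemma Collect_in_sets [measurable (raw)]:
  "P \<in> measurable M (count_space UNIV) \<Longrightarrow> Collect P \<in> sets M"
  using predE[where M = M and P = P] by (simp add: space_M pred_def)

lemma q_measurable_right [measurable]: "(\<lambda>y. q x y) \<in> borel_measurable M"
  using measurable_Pair2[OF q_measurable, of x] by (simp add: space_M)

lemma ball_cutoff_measurable [measurable]: "ball_cutoff z r \<in> borel_measurable M"
  unfolding ball_cutoff_def by measurable

lemma Gam_measurable [measurable]:
  assumes [measurable]: "f \<in> borel_measurable M"
  shows "Gam M q f \<in> borel_measurable M"
  unfolding Gam_def by measurable

lemma Gam_mult_le:
  assumes [measurable]: "f \<in> borel_measurable M" "\<phi> \<in> borel_measurable M"
    and \<phi>_bounds: "\<And>y. 0 \<le> \<phi> y" "\<And>y. \<phi> y \<le> 1"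
    and \<phi>_diff: "\<And>x y. (\<phi> x - \<phi> y)\<^sup>2 \<le> min 1 ((dist x y)\<^sup>2)"
  shows "Gam M q (\<lambda>x. f x * \<phi> x) x \<le> 2 * Gam M q f x + 2 * ennreal ((f x)\<^sup>2) * lam M q"
proof -
  have "ennreal ((f x * \<phi> x - f y * \<phi> y)\<^sup>2 * q x y)
      \<le> 2 * ennreal ((f x - f y)\<^sup>2 * q x y)
        + 2 * ennreal ((f x)\<^sup>2) * ennreal (min 1 ((dist x y)\<^sup>2) * q x y)" for y
  proof -
    have sq: "(f x * \<phi> x - f y * \<phi> y)\<^sup>2 \<le> 2 * (f x - f y)\<^sup>2 + 2 * (f x)\<^sup>2 * min 1 ((dist x y)\<^sup>2)"
      using sq_diff_mult_le[of "\<phi> y" "f x" "\<phi> x" "f y"] \<phi>_bounds[of y]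
        mult_left_mono[OF \<phi>_diff[of x y], of "2 * (f x)\<^sup>2"]
      by simp
    have "(f x * \<phi> x - f y * \<phi> y)\<^sup>2 * q x y
        \<le> 2 * ((f x - f y)\<^sup>2 * q x y) + 2 * (f x)\<^sup>2 * (min 1 ((dist x y)\<^sup>2) * q x y)"
      using mult_right_mono[OF sq q_nonneg[of x y]] by (simp add: algebra_simps)
    then have "ennreal ((f x * \<phi> x - f y * \<phi> y)\<^sup>2 * q x y)
        \<le> ennreal (2 * ((f x - f y)\<^sup>2 * q x y) + 2 * (f x)\<^sup>2 * (min 1 ((dist x y)\<^sup>2) * q x y))"
      by (rule ennreal_leI)
    moreover have "0 \<le> (f x - f y)\<^sup>2 * q x y" "0 \<le> min 1 ((dist x y)\<^sup>2) * q x y"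
      using q_nonneg[of x y] by simp_all
    ultimately show ?thesis
      by (simp add: ennreal_plus ennreal_mult)
  qed
  then have "Gam M q (\<lambda>x. f x * \<phi> x) x
      \<le> (\<integral>\<^sup>+ y. 2 * ennreal ((f x - f y)\<^sup>2 * q x y)
          + 2 * ennreal ((f x)\<^sup>2) * ennreal (min 1 ((dist x y)\<^sup>2) * q x y) \<partial>M)"
    unfolding Gam_def by (rule nn_integral_mono)
  also have "\<dots> = 2 * Gam M q f x
      + 2 * ennreal ((f x)\<^sup>2) * (\<integral>\<^sup>+ y. ennreal (min 1 ((dist x y)\<^sup>2) * q x y) \<partial>M)"
    by (simp add: nn_integral_add nn_integral_cmult Gam_def)
  also have "\<dots> \<le> 2 * Gam M q f x + 2 * ennreal ((f x)\<^sup>2) * lam M q"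
    by (intro add_left_mono mult_left_mono nn_integral_le_lam) simp
  finally show ?thesis .
qed

lemma Aset_mult:
  assumes f: "f \<in> Aset M q" and lam_finite: "lam M q < \<infinity>"
    and \<phi>_meas [measurable]: "\<phi> \<in> borel_measurable M"
    and \<phi>_bounds: "\<And>y. 0 \<le> \<phi> y" "\<And>y. \<phi> y \<le> 1"
    and \<phi>_diff: "\<And>x y. (\<phi> x - \<phi> y)\<^sup>2 \<le> min 1 ((dist x y)\<^sup>2)"
  shows "(\<lambda>x. f x * \<phi> x) \<in> Aset M q"
proof -
  have f_meas [measurable]: "f \<in> borel_measurable M" using f by (simp add: Aset_def)
  obtain B C where B: "\<And>x. \<bar>f x\<bar> \<le> B" and C: "\<And>x. Gam M q f x \<le> ennreal C"
    using f unfolding Aset_def bounded_iff by auto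
  obtain l where l: "lam M q = ennreal l" "0 \<le> l"
    using lam_finite by (cases "lam M q") auto
  have "Gam M q (\<lambda>x. f x * \<phi> x) x \<le> ennreal (2 * max 0 C + 2 * B\<^sup>2 * l)" for x
  proof -
    have f_sq: "(f x)\<^sup>2 \<le> B\<^sup>2" using B[of x] by (metis abs_ge_zero power2_abs power_mono)
    have Gam_f: "Gam M q f x \<le> ennreal (max 0 C)"
      using C[of x] by (rule order_trans) (simp add: ennreal_leI)
    have "Gam M q (\<lambda>x. f x * \<phi> x) x \<le> 2 * Gam M q f x + 2 * ennreal ((f x)\<^sup>2) * lam M q"
      by (rule Gam_mult_le[OF f_meas \<phi>_meas \<phi>_bounds \<phi>_diff])
    also have "\<dots> \<le> 2 * ennreal (max 0 C) + 2 * ennreal (B\<^sup>2) * ennreal l"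
      unfolding l using Gam_f f_sq by (intro add_mono mult_left_mono mult_right_mono ennreal_leI) auto
    also have "\<dots> = ennreal (2 * max 0 C + 2 * B\<^sup>2 * l)"
      using l by (simp add: ennreal_mult ennreal_plus)
    finally show ?thesis .
  qed
  moreover have "\<bar>f x * \<phi> x\<bar> \<le> B" for x
    using B[of x] \<phi>_bounds[of x] by (simp add: abs_mult mult_le_one order_trans[OF mult_left_le])
  ultimately show ?thesis
    unfolding Aset_def bounded_iff by auto
qed

lemma Gam_le_outside_support:
  assumes [measurable]: "S \<in> sets M"
    and "\<And>y. y \<notin> S \<Longrightarrow> g y = 0" "x \<notin> S" "\<And>y. \<bar>g y\<bar> \<le> B"
  shows "Gam M q g x \<le> ennreal (B\<^sup>2) * (\<integral>\<^sup>+ y. ennreal (indicator S y * q x y) \<partial>M)"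
proof -
  have "(g x - g y)\<^sup>2 * q x y \<le> B\<^sup>2 * (indicator S y * q x y)" for y
  proof (cases "y \<in> S")
    case True
    have "(g y)\<^sup>2 \<le> B\<^sup>2" using assms(4)[of y] by (metis abs_ge_zero power2_abs power_mono)
    then show ?thesis
      using True assms(2,3) q_nonneg[of x y] by (simp add: mult_right_mono)
  qed (use assms(2,3) in simp)
  then have "Gam M q g x \<le> (\<integral>\<^sup>+ y. ennreal (B\<^sup>2) * ennreal (indicator S y * q x y) \<partial>M)"
    unfolding Gam_def by (intro nn_integral_mono) (simp add: ennreal_mult'[symmetric] ennreal_leI)
  then show ?thesis
    by (simp add: nn_integral_cmult)
qed

lemma Gam_mult_ball_cutoff_le:
  fixes n k :: nat
  assumes f: "f \<in> Aset M q"
    and m_le_V: "\<And>x. dist z x \<le> real n + real k + 2 \<Longrightarrow> m \<le> V x"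
  shows "Gam M q (\<lambda>x. f x * ball_cutoff z (real n) x) x
    \<le> ennreal (2 * exp (- m)) * (ennreal (exp (V x)) * Gam M q f x)
      + ennreal (2 * exp (- m)) * lam M q * (ennreal (exp (V x)) * ennreal ((f x)\<^sup>2))
      + ennreal ((supnorm f)\<^sup>2) * (\<integral>\<^sup>+ y. ennreal (indicator {x. real n + real k + 2 < dist z x} x
          * indicator {y. dist z y \<le> real n + 1} y * q x y) \<partial>M)"
    (is "_ \<le> ?near + ?far")
proof (cases "real n + real k + 2 < dist z x")
  case False
  define g where "g = (\<lambda>x. f x * ball_cutoff z (real n) x)"
  define c where "c = ennreal (2 * exp (- m))"
  have [measurable]: "f \<in> borel_measurable M" using f by (simp add: Aset_def)
  have "1 \<le> exp (- m) * exp (V x)"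
    using False m_le_V[of x] by (simp add: exp_add[symmetric])
  then have two_le: "2 \<le> c * ennreal (exp (V x))"
    using ennreal_leI[of 2 "2 * exp (- m) * exp (V x)"] by (simp add: c_def ennreal_mult[symmetric])
  have "Gam M q g x \<le> 2 * (Gam M q f x + ennreal ((f x)\<^sup>2) * lam M q)"
    unfolding g_def
    using Gam_mult_le[OF _ _ ball_cutoff_nonneg ball_cutoff_le_one ball_cutoff_diff_sq_le]
    by (simp add: distrib_left mult.assoc)
  also have "\<dots> \<le> c * ennreal (exp (V x)) * (Gam M q f x + ennreal ((f x)\<^sup>2) * lam M q)"
    by (rule mult_right_mono[OF two_le]) simp
  also have "\<dots> = ?near"
    by (simp add: c_def algebra_simps)
  finally show ?thesis
    unfolding g_def by (rule add_increasing2[rotated]) simp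
next
  case True
  define S where "S = {y. dist z y \<le> real n + 1}"
  have "\<bar>f y * ball_cutoff z (real n) y\<bar> \<le> supnorm f" for y
  proof -
    have "\<bar>f y * ball_cutoff z (real n) y\<bar> \<le> \<bar>f y\<bar>"
      using ball_cutoff_nonneg[of z "real n" y] ball_cutoff_le_one[of z "real n" y]
      by (simp add: abs_mult mult_left_le)
    also have "\<dots> \<le> supnorm f"
      using f by (simp add: Aset_def abs_le_supnorm)
    finally show ?thesis .
  qed
  then have "Gam M q (\<lambda>x. f x * ball_cutoff z (real n) x) x
      \<le> ennreal ((supnorm f)\<^sup>2) * (\<integral>\<^sup>+ y. ennreal (indicator S y * q x y) \<partial>M)"
    using True
    by (intro Gam_le_outside_support) (auto simp: S_def dest: dist_less_of_ball_cutoff_nonzero)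
  also have "\<dots> = ?far"
    using True by (simp add: S_def)
  finally show ?thesis
    by (rule add_increasing[rotated]) simp
qed

lemma Energy_mult_ball_cutoff_le:
  fixes n k :: nat
  assumes f: "f \<in> Aset M q" and [measurable]: "V \<in> borel_measurable M"
    and m_le_V: "\<And>x. dist z x \<le> real n + real k + 2 \<Longrightarrow> m \<le> V x"
  shows "Energy M q (\<lambda>x. f x * ball_cutoff z (real n) x)
    \<le> ennreal (2 * exp (- m)) * EnergyV M q V f
      + ennreal (2 * exp (- m)) * lam M q
          * (\<integral>\<^sup>+ x. ennreal ((f x)\<^sup>2) \<partial>density M (\<lambda>x. ennreal (exp (V x))))
      + ennreal ((supnorm f)\<^sup>2) * eta M q z n k"
proof -
  define c where "c = ennreal (2 * exp (- m))"
  define H where "H x = (\<integral>\<^sup>+ y. ennreal (indicator {x. real n + real k + 2 < dist z x} x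
      * indicator {y. dist z y \<le> real n + 1} y * q x y) \<partial>M)" for x
  have [measurable]: "f \<in> borel_measurable M" using f by (simp add: Aset_def)
  have [measurable]: "H \<in> borel_measurable M" unfolding H_def by measurable
  have "Energy M q (\<lambda>x. f x * ball_cutoff z (real n) x)
      \<le> (\<integral>\<^sup>+ x. c * (ennreal (exp (V x)) * Gam M q f x)
        + c * lam M q * (ennreal (exp (V x)) * ennreal ((f x)\<^sup>2)) + ennreal ((supnorm f)\<^sup>2) * H x \<partial>M)"
    unfolding Energy_def c_def H_def
    by (intro nn_integral_mono Gam_mult_ball_cutoff_le[OF f m_le_V])
  also have "\<dots> = c * (\<integral>\<^sup>+ x. ennreal (exp (V x)) * Gam M q f x \<partial>M)
      + c * lam M q * (\<integral>\<^sup>+ x. ennreal (exp (V x)) * ennreal ((f x)\<^sup>2) \<partial>M)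
      + ennreal ((supnorm f)\<^sup>2) * (\<integral>\<^sup>+ x. H x \<partial>M)"
    by (simp add: nn_integral_add nn_integral_cmult)
  also have "\<dots> = c * EnergyV M q V f
      + c * lam M q * (\<integral>\<^sup>+ x. ennreal ((f x)\<^sup>2) \<partial>density M (\<lambda>x. ennreal (exp (V x))))
      + ennreal ((supnorm f)\<^sup>2) * eta M q z n k"
    unfolding EnergyV_def eta_def H_def by (simp add: nn_integral_density)
  finally show ?thesis unfolding c_def .
qed

lemma super_poincare_localized:
  fixes n k :: nat
  assumes SPI: "super_poincare M q \<beta>" and f: "f \<in> Aset M q" and "lam M q < \<infinity>" and "s > 0"
    and [measurable]: "V \<in> borel_measurable M"
    and V_le_Z: "\<And>x. dist z x \<le> real n + 1 \<Longrightarrow> V x \<le> Z"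
    and m_le_V: "\<And>x. dist z x \<le> real n + real k + 2 \<Longrightarrow> m \<le> V x"
  shows "(\<integral>\<^sup>+ x. ennreal ((f x)\<^sup>2 * indicator {x. dist z x \<le> real n} x) \<partial>density M (\<lambda>x. ennreal (exp (V x))))
    \<le> ennreal (exp Z) * (ennreal s * (ennreal (2 * exp (- m)) * EnergyV M q V f
        + ennreal (2 * exp (- m)) * lam M q
            * (\<integral>\<^sup>+ x. ennreal ((f x)\<^sup>2) \<partial>density M (\<lambda>x. ennreal (exp (V x))))
        + ennreal ((supnorm f)\<^sup>2) * eta M q z n k)
      + ennreal (\<beta> s) * (ennreal (exp (- m))
          * (\<integral>\<^sup>+ x. ennreal \<bar>f x\<bar> \<partial>density M (\<lambda>x. ennreal (exp (V x)))))\<^sup>2)"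
proof -
  define g where "g = (\<lambda>x. f x * ball_cutoff z (real n) x)"
  have [measurable]: "f \<in> borel_measurable M" using f by (simp add: Aset_def)
  have g_Aset: "g \<in> Aset M q"
    unfolding g_def using assms(1-3)
    by (intro Aset_mult ball_cutoff_measurable ball_cutoff_nonneg ball_cutoff_le_one ball_cutoff_diff_sq_le)
  have "(\<integral>\<^sup>+ x. ennreal ((f x)\<^sup>2 * indicator {x. dist z x \<le> real n} x) \<partial>density M (\<lambda>x. ennreal (exp (V x))))
      \<le> ennreal (exp Z) * (\<integral>\<^sup>+ x. ennreal ((g x)\<^sup>2) \<partial>M)"
    using g_Aset by (intro nn_integral_density_sq_indicator_le V_le_Z)
      (auto simp: g_def Aset_def ball_cutoff_eq_one)
  also have "\<dots> \<le> ennreal (exp Z)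
      * (ennreal s * Energy M q g + ennreal (\<beta> s) * (\<integral>\<^sup>+ x. ennreal \<bar>g x\<bar> \<partial>M)\<^sup>2)"
    using finite_measure_axioms
    by (intro mult_left_mono super_poincare_Aset[OF SPI _ g_Aset \<open>s > 0\<close>]) (simp_all add: finite_measure_def)
  finally show ?thesis
    unfolding g_def using f g_Aset
    by (elim order_trans)
      (intro mult_left_mono add_mono power_mono Energy_mult_ball_cutoff_le m_le_V nn_integral_abs_le_density;
        auto simp: g_def Aset_def abs_mult ball_cutoff_nonneg ball_cutoff_le_one mult_left_le
          dest!: dist_less_of_ball_cutoff_nonzero)
qed

end

lemma ennreal_bound_collect_constants:
  fixes E L F H G :: ennreal and Z m K J s b B :: real
  assumes "0 < s" "0 < b" "Z - m \<le> K" "J = Z - 2 * m"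
  shows "ennreal (exp Z) * (ennreal s * (ennreal (2 * exp (- m)) * E + ennreal (2 * exp (- m)) * L * F
        + ennreal (B\<^sup>2) * H) + ennreal b * (ennreal (exp (- m)) * G)\<^sup>2)
    \<le> ennreal (2 * s * exp K) * E + ennreal (16 * s * exp K) * L * F
      + ennreal (16 * s * exp Z * B\<^sup>2) * H + ennreal (b * exp J) * G\<^sup>2"
proof -
  have exp_le: "exp Z * s * (2 * exp (- m)) \<le> 2 * s * exp K"
    using assms(1,3) by (simp add: mult.commute mult.left_commute exp_add[symmetric])
  have "Z + - m + - m = J" using assms(4) by simp
  then have exp_J: "exp Z * exp (- m) * exp (- m) = exp J" by (metis exp_add)
  have e3: "ennreal (b * exp J) = ennreal b * (ennreal (exp Z) * (ennreal (exp (- m)))\<^sup>2)"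
    unfolding exp_J[symmetric] power2_eq_square using assms(2) by (simp add: ennreal_mult mult.assoc)
  have e1: "ennreal (exp Z * s * (2 * exp (- m))) = ennreal (exp Z) * ennreal s * ennreal (2 * exp (- m))"
    using assms(1) by (simp add: ennreal_mult)
  have e2: "ennreal (exp Z * s * B\<^sup>2) = ennreal (exp Z) * ennreal s * ennreal (B\<^sup>2)"
    using assms(1) by (simp add: ennreal_mult)
  have "ennreal (exp Z) * (ennreal s * (ennreal (2 * exp (- m)) * E + ennreal (2 * exp (- m)) * L * F
        + ennreal (B\<^sup>2) * H) + ennreal b * (ennreal (exp (- m)) * G)\<^sup>2)
    = ennreal (exp Z * s * (2 * exp (- m))) * E + ennreal (exp Z * s * (2 * exp (- m))) * L * F
      + ennreal (exp Z * s * B\<^sup>2) * H + ennreal (b * exp J) * G\<^sup>2"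
    unfolding e1 e2 e3 by (simp add: algebra_simps power_mult_distrib)
  also have "\<dots> \<le> ennreal (2 * s * exp K) * E + ennreal (16 * s * exp K) * L * F
      + ennreal (16 * s * exp Z * B\<^sup>2) * H + ennreal (b * exp J) * G\<^sup>2"
    using exp_le order_trans[OF exp_le mult_right_mono[of "2 * s" "16 * s" "exp K"]] assms(1)
    by (intro add_mono mult_right_mono ennreal_leI) auto
  finally show ?thesis .
qed

theorem lemma2p7:
  fixes M :: "'a::polish_space measure"
    and q :: "'a \<Rightarrow> 'a \<Rightarrow> real"
    and V :: "'a \<Rightarrow> real"
    and z0 :: 'a
    and \<beta> :: "real \<Rightarrow> real"
    and n k :: nat and s :: real and f :: "'a \<Rightarrow> real"
  assumes sets_M: "sets M = sets borel"
    and prob: "prob_space M"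
    and q_meas: "(\<lambda>(x, y). q x y) \<in> borel_measurable (M \<Otimes>\<^sub>M M)"
    and q_nonneg: "\<And>x y. q x y \<ge> 0"
    and q_diag: "\<And>x. q x x = 0"
    and lam_fin: "lam M q < \<infinity>"
    and A_dense: "\<And>g \<epsilon>. g \<in> borel_measurable M \<Longrightarrow> (\<integral>\<^sup>+ x. ennreal ((g x)\<^sup>2) \<partial>M) < \<infinity> \<Longrightarrow> \<epsilon> > 0
                  \<Longrightarrow> \<exists>h\<in>Aset M q. (\<integral>\<^sup>+ x. ennreal ((h x - g x)\<^sup>2) \<partial>M) < ennreal \<epsilon>"
    and V_meas: "V \<in> borel_measurable M"
    and V_bdd: "\<And>r. bounded (V ` {x. dist z0 x \<le> r})"
    and V_norm: "(\<integral>\<^sup>+ x. ennreal (exp (V x)) \<partial>M) = 1"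
    and \<beta>_pos: "\<And>r. r > 0 \<Longrightarrow> \<beta> r > 0"
    and \<beta>_decr: "\<And>r t. 0 < r \<Longrightarrow> r \<le> t \<Longrightarrow> \<beta> t \<le> \<beta> r"
    and SPI: "super_poincare M q \<beta>"
    and n: "n \<ge> 1" and k: "k \<ge> 1" and s: "s > 0"
    and f: "f \<in> Aset M q"
  shows "(\<integral>\<^sup>+ x. ennreal ((f x)\<^sup>2 * indicator {x. dist z0 x \<le> real n} x) \<partial>(density M (\<lambda>x. ennreal (exp (V x)))))
    \<le> ennreal (2 * s * exp (Kc z0 V n k)) * EnergyV M q V f
      + ennreal (16 * s * exp (Kc z0 V n k)) * lam M q
          * (\<integral>\<^sup>+ x. ennreal ((f x)\<^sup>2) \<partial>(density M (\<lambda>x. ennreal (exp (V x)))))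
      + ennreal (16 * s * exp (Zc z0 V n) * (supnorm f)\<^sup>2) * eta M q z0 n k
      + ennreal (\<beta> s * exp (Jc z0 V n k))
          * (\<integral>\<^sup>+ x. ennreal \<bar>f x\<bar> \<partial>(density M (\<lambda>x. ennreal (exp (V x)))))\<^sup>2"
proof -
  interpret jump_kernel M q
    using prob_space.finite_measure[OF prob] sets_M q_meas q_nonneg
    by (simp add: jump_kernel_def jump_kernel_axioms_def)
  define m where "m = Inf (V ` {x. dist z0 x \<le> real n + real k + 2})"
  have V_le_Zc: "V x \<le> Zc z0 V n" if "dist z0 x \<le> real n + 1" for x
    unfolding Zc_def using that by (intro cSup_upper bounded_imp_bdd_above V_bdd) auto
  have m_le_V: "m \<le> V x" if "dist z0 x \<le> real n + real k + 2" for x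
    unfolding m_def using that by (intro cInf_lower bounded_imp_bdd_below V_bdd) auto
  have "Zc z0 V n \<le> Sup (V ` {x. dist z0 x \<le> real n + 2})"
    unfolding Zc_def by (intro cSup_subset_mono bounded_imp_bdd_above V_bdd) (auto intro: exI[of _ z0])
  then have "Zc z0 V n - m \<le> Kc z0 V n k"
    by (simp add: Kc_def m_def)
  then show ?thesis
    using s \<beta>_pos[OF s]
    by (intro order_trans[OF super_poincare_localized[OF SPI f lam_fin s V_meas V_le_Zc m_le_V]
          ennreal_bound_collect_constants])
      (simp_all add: Jc_def Zc_def m_def)
qed

end
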